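(* Let $k$ be a field of characteristic zero, $r\geq1$, $S=k[x_1,x_2,x_3]$, and let $\alpha_1,\alpha_2,\alpha_3$ be the derivations of $S$ given for $k'\in\{1,2,3\}$ by $\alpha_1(x_{k'})=x_{k'}$, $\alpha_2(x_{k'})=x_{k'}(x_{k'}^r-x_1^r)$, $\alpha_3(x_{k'})=x_{k'}(x_{k'}^r-x_1^r)(x_{k'}^r-x_2^r)$, which form an $S$-basis of the Lie–Rinehart algebra $L=\operatorname{Der}\mathcal{A}_r$. In the universal enveloping algebra $U=\mathcal{D}(\mathcal{A}_r)$ of $(S,L)$ define $$u_1=\alpha_3-(x_3^r-x_1^r)\alpha_2+(x_3^r-x_1^r)(x_2^r-x_1^r)\alpha_1,\quad u_2=\alpha_3-(x_3^r-x_2^r)\alpha_2,\quad u_3=\alpha_3.$$ Then $[u_k,x_l]=0$ for all $k,l\in\{1,2,3\}$ with $k\neq l$; in particular $(S,L)$ satisfies the orthogonality condition with the family $(u_1,u_2,u_3)$.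
   Context: $\mathcal{A}_r$ is the hyperplane arrangement in $k^3$ with defining polynomial $x_1x_2x_3(x_2^r-x_1^r)(x_3^r-x_1^r)(x_3^r-x_2^r)$; $\operatorname{Der}\mathcal{A}_r$ is the free $S$-module with basis $\alpha_1,\alpha_2,\alpha_3$ above, a Lie subalgebra of $\operatorname{Der}(S)$, and $\mathcal{D}(\mathcal{A}_r)$ is the subalgebra of $\operatorname{End}_k(S)$ generated by $\operatorname{Der}\mathcal{A}_r$ and multiplications by elements of $S$. In $U$, $[u,x_l]=ux_l-x_lu$. A triangularizable $(S,L)$ with basis $\alpha_1,\ldots,\alpha_n$ satisfies the orthogonality condition if there are $u_1,\ldots,u_n\in U$ of the form $u_k=\alpha_n+\sum_{i=1}^{n-1}f_k^i\alpha_i$ with $f_k^i\in S$ and $[u_k,x_l]=0$ whenever $k\neq l$. *)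

theory Defs
  imports "HOL-Computational_Algebra.Polynomial"
begin

text \<open>The polynomial ring S = k[x1,x2,x3], modelled as iterated univariate
polynomials k[x1][x2][x3].\<close>
type_synonym 'a S3 = "'a poly poly poly"

definition var :: "nat \<Rightarrow> 'a::comm_ring_1 S3" where
  "var l = (if l = 1 then [:[:monom 1 1:]:]
            else if l = 2 then [:monom 1 1:]
            else monom 1 1)"

definition const3 :: "'a::comm_ring_1 \<Rightarrow> 'a S3" where
  "const3 c = [:[:[:c:]:]:]"

definition is_derivation :: "('a::comm_ring_1 S3 \<Rightarrow> 'a S3) \<Rightarrow> bool" where
  "is_derivation D \<longleftrightarrow>
     (\<forall>f g. D (f + g) = D f + D g) \<and>
     (\<forall>c f. D (const3 c * f) = const3 c * D f) \<and>
     (\<forall>f g. D (f * g) = f * D g + g * D f)"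

text \<open>Commutator [u, f] = u f - f u in End_k(S), where f acts by multiplication.\<close>
definition commutator :: "('a::comm_ring_1 S3 \<Rightarrow> 'a S3) \<Rightarrow> 'a S3 \<Rightarrow> ('a S3 \<Rightarrow> 'a S3)" where
  "commutator u f = (\<lambda>g. u (f * g) - f * u g)"

end

theory Submission
  imports Defs
begin

text \<open>The S-linear combinations u_k of derivations are again derivations, and for a
derivation D the commutator [D, f] is multiplication by D f. So [u_k, x_l] = 0 reduces to
u_k(x_l) = 0, a polynomial identity in x_1^r, x_2^r, x_3^r: u_k is the combination of the
triangular basis that kills every x_l with l \<noteq> k.\<close>

lemma is_derivation_add:
  assumes "is_derivation D" and "is_derivation E"
  shows "is_derivation (\<lambda>f. D f + E f)"
  using assms unfolding is_derivation_def by (auto simp: distrib_left add_ac)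

lemma is_derivation_diff:
  assumes "is_derivation D" and "is_derivation E"
  shows "is_derivation (\<lambda>f. D f - E f)"
  using assms unfolding is_derivation_def by (auto simp: right_diff_distrib)

lemma is_derivation_mult_left:
  assumes "is_derivation D"
  shows "is_derivation (\<lambda>f. h * D f)"
  using assms unfolding is_derivation_def by (auto simp: distrib_left mult.left_commute)

lemma commutator_derivation:
  assumes "is_derivation D"
  shows "commutator D f = (\<lambda>g. g * D f)"
  using assms unfolding is_derivation_def commutator_def by auto

theorem proposition1p24:
  fixes \<alpha>1 \<alpha>2 \<alpha>3 :: "'a::field_char_0 S3 \<Rightarrow> 'a S3"
    and r :: nat
    and u :: "nat \<Rightarrow> 'a S3 \<Rightarrow> 'a S3"
  assumes "r \<ge> 1"
    and "is_derivation \<alpha>1" and "is_derivation \<alpha>2" and "is_derivation \<alpha>3"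
    and "\<And>j. j \<in> {1,2,3} \<Longrightarrow> \<alpha>1 (var j) = var j"
    and "\<And>j. j \<in> {1,2,3} \<Longrightarrow> \<alpha>2 (var j) = var j * (var j ^ r - var 1 ^ r)"
    and "\<And>j. j \<in> {1,2,3} \<Longrightarrow>
           \<alpha>3 (var j) = var j * (var j ^ r - var 1 ^ r) * (var j ^ r - var 2 ^ r)"
    and "u 1 = (\<lambda>f. \<alpha>3 f - (var 3 ^ r - var 1 ^ r) * \<alpha>2 f
                   + (var 3 ^ r - var 1 ^ r) * (var 2 ^ r - var 1 ^ r) * \<alpha>1 f)"
    and "u 2 = (\<lambda>f. \<alpha>3 f - (var 3 ^ r - var 2 ^ r) * \<alpha>2 f)"
    and "u 3 = \<alpha>3"
  shows "\<forall>k \<in> {1,2,3}. \<forall>l \<in> {1,2,3}. k \<noteq> l \<longrightarrow> commutator (u k) (var l) = (\<lambda>_. 0)"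
proof (intro ballI impI)
  fix k l :: nat
  assume k: "k \<in> {1,2,3}" and l: "l \<in> {1,2,3}" and "k \<noteq> l"
  have "is_derivation (u k)"
    using k assms(2-4,8-10)
    by (auto intro!: is_derivation_add is_derivation_diff is_derivation_mult_left)
  moreover have "u k (var l) = 0"
    using k l \<open>k \<noteq> l\<close>
    by (auto simp: assms(5-7,9,10) assms(8)[simplified] algebra_simps)
  ultimately show "commutator (u k) (var l) = (\<lambda>_. 0)"
    by (simp add: commutator_derivation)
qed

end
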